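(* Let $q$ be a power of a prime $p$ and let $n\ge 2$ be an integer such that every prime divisor of $n$ divides $p(q-1)$. Then $n$ is $\mathbb{F}_q$-practical.
   Context: A positive integer $n$ is $\mathbb{F}_q$-practical if for every integer $1\le k\le n-1$ the polynomial $x^n-1$ has a divisor of degree $k$ in $\mathbb{F}_q[x]$. *)

theory Defs
  imports "HOL-Computational_Algebra.Computational_Algebra"
begin

text \<open>A positive integer n is F_q-practical, where the finite field F_q is represented
  by a finite field type 'a with CARD('a) = q: for every 1 <= k <= n-1 the polynomial
  x^n - 1 has a divisor of degree k in 'a[x].\<close>
definition Fq_practical :: "'a::{field,finite} itself \<Rightarrow> nat \<Rightarrow> bool" where
  "Fq_practical _ n \<longleftrightarrow> n > 0 \<and>
     (\<forall>k. 1 \<le> k \<and> k \<le> n - 1 \<longrightarrow>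
        (\<exists>f :: 'a poly. degree f = k \<and> f dvd (monom 1 n - 1)))"

end

theory Submission
  imports Defs "HOL-Number_Theory.Residues"
begin

(* If x^r - 1 splits into linear factors x - c over F_q, then x^(rn) - 1 = \<Prod>(x^n - c), and one
   of the c is 1. Every k < rn is an + b with a < r and b < n, and a degree-b divisor of x^n - 1
   times a of the other factors x^n - c divides x^(rn) - 1 and has degree k; so F_q-practicality
   passes from n to rn. For a prime r dividing n, x^r - 1 splits: if r = p it is (x - 1)^p, and if
   r divides q - 1 it divides x^(q-1) - 1, whose roots are the q - 1 distinct elements of F_q^*. *)

(* Residues pulls in HOL-Algebra, whose monom would shadow the polynomial monomial. *)
hide_const (open) UnivPoly.monom

definition splits_linear :: "'a::comm_ring_1 poly \<Rightarrow> bool" where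
  "splits_linear P \<longleftrightarrow> (\<exists>M. P = (\<Prod>c\<in>#M. [:- c, 1:]))"

lemma prod_linear_factors_dvd:
  fixes P :: "'a::idom poly"
  assumes "finite S" "\<And>c. c \<in> S \<Longrightarrow> poly P c = 0"
  shows "(\<Prod>c\<in>S. [:- c, 1:]) dvd P"
  using assms
proof (induction S arbitrary: P rule: finite_induct)
  case (insert c S)
  then obtain Q where P: "P = [:- c, 1:] * Q"
    using poly_eq_0_iff_dvd by (metis dvdE insertI1)
  have "poly Q d = 0" if "d \<in> S" for d
    using insert.prems[of d] that insert.hyps(2) by (auto simp: P)
  then have "(\<Prod>c\<in>S. [:- c, 1:]) dvd Q"
    by (rule insert.IH)
  then have "[:- c, 1:] * (\<Prod>c\<in>S. [:- c, 1:]) dvd P"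
    unfolding P by (rule mult_dvd_mono[OF dvd_refl])
  then show ?case
    using insert.hyps by (subst prod.insert)
qed simp

lemma monic_eq_prod_roots:
  fixes P :: "'a::idom poly"
  assumes monic: "lead_coeff P = 1" and roots: "card {c. poly P c = 0} = degree P"
  shows "P = (\<Prod>c | poly P c = 0. [:- c, 1:])"
proof -
  define S where "S = {c. poly P c = 0}"
  define D where "D = (\<Prod>c\<in>S. [:- c, 1:])"
  have "P \<noteq> 0"
    using monic by auto
  then have "finite S"
    unfolding S_def by (rule poly_roots_finite)
  then have "D dvd P"
    unfolding D_def by (rule prod_linear_factors_dvd) (simp add: S_def)
  then obtain g where P: "P = D * g"
    by (elim dvdE)
  have "D \<noteq> 0"
    unfolding D_def using \<open>finite S\<close> by simp
  have "lead_coeff D = 1"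
    unfolding D_def by (simp add: lead_coeff_prod)
  have "degree D = degree P"
    unfolding D_def using \<open>finite S\<close> roots by (simp add: degree_prod_sum_eq S_def)
  have "g \<noteq> 0"
    using P \<open>P \<noteq> 0\<close> by auto
  have "degree P = degree D + degree g"
    unfolding P using \<open>D \<noteq> 0\<close> \<open>g \<noteq> 0\<close> by (rule degree_mult_eq)
  moreover have "lead_coeff P = lead_coeff D * lead_coeff g"
    unfolding P by (rule lead_coeff_mult)
  ultimately
  have "degree g = 0" "lead_coeff g = 1"
    using \<open>degree D = degree P\<close> \<open>lead_coeff D = 1\<close> monic by simp_all
  then have "g = 1"
    by (metis degree_0_id one_pCons)
  with P show ?thesis
    by (simp add: D_def S_def)
qed

lemma card_roots_eq_degree_if_dvd:
  fixes P Q :: "'a::idom poly"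
  assumes "Q dvd P" "P \<noteq> 0" "card {c. poly P c = 0} = degree P"
  shows "card {c. poly Q c = 0} = degree Q"
proof -
  obtain T where P: "P = Q * T"
    using assms(1) by (elim dvdE)
  have "Q \<noteq> 0" "T \<noteq> 0"
    using P assms(2) by auto
  have "{c. poly P c = 0} = {c. poly Q c = 0} \<union> {c. poly T c = 0}"
    by (auto simp: P)
  then have "card {c. poly P c = 0} \<le> card {c. poly Q c = 0} + card {c. poly T c = 0}"
    by (simp only: card_Un_le)
  moreover have "card {c. poly Q c = 0} \<le> degree Q" "card {c. poly T c = 0} \<le> degree T"
    using \<open>Q \<noteq> 0\<close> \<open>T \<noteq> 0\<close> by (simp_all add: card_poly_roots_bound)
  moreover have "degree P = degree Q + degree T"
    unfolding P using \<open>Q \<noteq> 0\<close> \<open>T \<noteq> 0\<close> by (rule degree_mult_eq)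
  ultimately show ?thesis
    using assms(3) by linarith
qed

lemma degree_monom_minus_const:
  assumes "n \<ge> 1"
  shows "degree (monom (1::'a::comm_ring_1) n - [:c:]) = n"
proof -
  have "degree (monom (1::'a) n + - [:c:]) = n"
    using assms by (subst degree_add_eq_left) (auto simp: degree_monom_eq)
  then show ?thesis by (simp only: diff_conv_add_uminus)
qed

lemma degree_x_pow_minus_one:
  assumes "n \<ge> 1"
  shows "degree (monom 1 n - 1 :: 'a::comm_ring_1 poly) = n"
  using degree_monom_minus_const[OF assms, of 1] by (simp add: one_pCons)

lemma monom_minus_const_nonzero:
  assumes "n \<ge> 1"
  shows "monom (1::'a::comm_ring_1) n - [:c:] \<noteq> 0"
  using degree_monom_minus_const[OF assms, of c] assms by auto

lemma prod_mset_monom_minus_const_nonzero: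
  assumes "n \<ge> 1"
  shows "(\<Prod>c\<in>#N. monom (1::'a::idom) n - [:c:]) \<noteq> 0"
proof (induction N)
  case (add c N)
  then show ?case
    using monom_minus_const_nonzero[OF assms, of c] by simp
qed simp

lemma degree_prod_mset_monom_minus_const:
  fixes N :: "'a::idom multiset"
  assumes "n \<ge> 1"
  shows "degree (\<Prod>c\<in>#N. monom 1 n - [:c:]) = n * size N"
proof (induction N)
  case (add c N)
  have "degree ((monom 1 n - [:c:]) * (\<Prod>c\<in>#N. monom 1 n - [:c:])) = n + n * size N"
    using add monom_minus_const_nonzero[OF assms, of c] prod_mset_monom_minus_const_nonzero[OF assms, of N]
    by (subst degree_mult_eq) (simp_all add: degree_monom_minus_const[OF assms])
  then show ?case by simp
qed simp

lemma pcompose_power: "pcompose (p ^ k) q = pcompose p q ^ k"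
  by (induction k) (simp_all add: pcompose_mult pcompose_1)

lemma pcompose_prod_mset: "pcompose (\<Prod>c\<in>#M. f c) q = (\<Prod>c\<in>#M. pcompose (f c) q)"
  by (induction M) (simp_all add: pcompose_mult pcompose_1)

lemma x_pow_minus_one_dvd:
  assumes "r dvd n"
  shows "(monom 1 r - 1 :: 'a::comm_ring_1 poly) dvd monom 1 n - 1"
proof -
  obtain s where "n = r * s"
    using assms by (elim dvdE)
  then have "monom 1 n - 1 = monom (1::'a) r ^ s - 1"
    by (simp add: monom_power)
  also have "\<dots> = (monom 1 r - 1) * (\<Sum>i<s. monom 1 r ^ i)"
    by (rule power_diff_1_eq)
  finally show ?thesis
    by (rule dvdI)
qed

lemma x_pow_mult_minus_one_factors:
  fixes M :: "'a::comm_ring_1 multiset"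
  assumes "monom 1 r - 1 = (\<Prod>c\<in>#M. [:- c, 1:])"
  shows "monom 1 (r * n) - 1 = (\<Prod>c\<in>#M. monom 1 n - [:c:])"
proof -
  have "monom (1::'a) r = [:0, 1:] ^ r"
    by (simp add: monom_altdef)
  then have "monom 1 (r * n) - 1 = pcompose (monom 1 r - 1) (monom (1::'a) n)"
    by (simp add: pcompose_diff pcompose_1 pcompose_power pcompose_pCons monom_power mult.commute)
  also have "\<dots> = (\<Prod>c\<in>#M. monom 1 n - [:c:])"
  proof -
    have "(\<lambda>c. [:- c:] + monom 1 n) = (\<lambda>c. monom (1::'a) n - [:c:])"
      by (simp add: fun_eq_iff)
    then show ?thesis
      by (simp add: assms pcompose_prod_mset pcompose_pCons)
  qed
  finally show ?thesis .
qed

lemma power_card_minus_one_eq_one: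
  fixes x :: "'a::{field,finite}"
  assumes "x \<noteq> 0"
  shows "x ^ (card (UNIV :: 'a set) - 1) = 1"
proof -
  have "(\<Prod>y\<in>UNIV - {0}. x * y) = x ^ card (UNIV - {0::'a}) * (\<Prod>y\<in>UNIV - {0}. y)"
    by (simp add: prod.distrib)
  also have "(\<Prod>y\<in>UNIV - {0}. x * y) = (\<Prod>y\<in>UNIV - {0::'a}. y)"
    by (rule prod.reindex_bij_witness[of _ "\<lambda>y. y / x" "\<lambda>y. x * y"]) (use assms in auto)
  finally show ?thesis
    by (simp add: card_Diff_singleton)
qed

lemma splits_x_pow_minus_one_if_dvd_card:
  assumes "r dvd card (UNIV :: 'a::{field,finite} set) - 1"
  shows "splits_linear (monom 1 r - 1 :: 'a poly)"
proof -
  define q where "q = card (UNIV :: 'a set)"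
  have "card {0 :: 'a, 1} \<le> q"
    unfolding q_def by (rule card_mono) auto
  then have "q \<ge> 2"
    by simp
  then have "r \<ge> 1"
    using assms unfolding q_def[symmetric] by (cases r) auto
  define P :: "'a poly" where "P = monom 1 (q - 1) - 1"
  have "degree P = q - 1"
    unfolding P_def using \<open>q \<ge> 2\<close> by (intro degree_x_pow_minus_one) simp
  have "{c. poly P c = 0} = UNIV - {0}"
    using \<open>q \<ge> 2\<close> power_card_minus_one_eq_one
    by (auto simp: P_def q_def poly_monom power_0_left)
  then have "card {c. poly P c = 0} = degree P"
    using \<open>degree P = q - 1\<close> by (simp add: card_Diff_singleton q_def)
  moreover have "P \<noteq> 0"
    using \<open>degree P = q - 1\<close> \<open>q \<ge> 2\<close> by auto
  moreover have "(monom 1 r - 1 :: 'a poly) dvd P"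
    unfolding P_def q_def using assms by (rule x_pow_minus_one_dvd)
  ultimately have "card {c. poly (monom 1 r - 1 :: 'a poly) c = 0} = degree (monom 1 r - 1 :: 'a poly)"
    using card_roots_eq_degree_if_dvd by blast
  moreover have "lead_coeff (monom 1 r - 1 :: 'a poly) = 1"
    using \<open>r \<ge> 1\<close> by (simp add: degree_x_pow_minus_one)
  ultimately have "monom 1 r - 1 = (\<Prod>c | poly (monom 1 r - 1 :: 'a poly) c = 0. [:- c, 1:])"
    by (rule monic_eq_prod_roots[rotated])
  then show ?thesis
    unfolding splits_linear_def prod_unfold_prod_mset by blast
qed

lemma splits_x_pow_char_minus_one:
  assumes "prime CHAR('a::comm_ring_1)"
  shows "splits_linear (monom 1 CHAR('a) - 1 :: 'a poly)"
proof -
  have "(-1 :: 'a poly) ^ CHAR('a) = - (1 ^ CHAR('a))"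
    by (rule minus_power_prime_CHAR) (use assms in auto)
  then have "monom 1 CHAR('a) - 1 = [:0, 1:] ^ CHAR('a) + (-1 :: 'a poly) ^ CHAR('a)"
    by (simp add: monom_altdef)
  also have "\<dots> = ([:0, 1:] + -1) ^ CHAR('a)"
    by (rule freshmans_dream[symmetric]) (use assms in simp_all)
  also have "[:0, 1:] + (-1 :: 'a poly) = [:- 1, 1:]"
    by (simp add: one_pCons)
  finally show ?thesis
    unfolding splits_linear_def by (intro exI[of _ "replicate_mset CHAR('a) 1"]) simp
qed

lemma exists_submset_of_size:
  assumes "k \<le> size M"
  shows "\<exists>N. N \<subseteq># M \<and> size N = k"
  using assms
proof (induction M arbitrary: k)
  case (add x M)
  show ?case
  proof (cases k)
    case (Suc k')
    with add obtain N where "N \<subseteq># M" "size N = k'"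
      by force
    with Suc show ?thesis
      by (intro exI[of _ "add_mset x N"]) simp
  qed simp
qed simp

lemma Fq_practical_dvd_of_degree_less:
  assumes "Fq_practical TYPE('a::{field,finite}) n" "b < n"
  obtains g :: "'a::{field,finite} poly" where "degree g = b" "g dvd monom 1 n - 1"
proof (cases "b = 0")
  case True
  with that[of 1] show ?thesis by simp
next
  case False
  with assms(2) have "1 \<le> b \<and> b \<le> n - 1"
    by simp
  with assms(1) that show ?thesis
    unfolding Fq_practical_def by blast
qed

lemma splits_x_pow_minus_one_elim:
  fixes r :: nat
  assumes "splits_linear (monom 1 r - 1 :: 'a::idom poly)" "r \<ge> 1"
  obtains M :: "'a::idom multiset"
  where "monom 1 r - 1 = (\<Prod>c\<in>#add_mset 1 M. [:- c, 1:])" "size M = r - 1"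
proof -
  obtain M :: "'a multiset" where M: "monom 1 r - 1 = (\<Prod>c\<in>#M. [:- c, 1:])"
    using assms(1) unfolding splits_linear_def by blast
  have "degree (monom 1 r - 1 :: 'a poly) = r"
    by (rule degree_x_pow_minus_one[OF assms(2)])
  also have "monom 1 r - 1 = (\<Prod>c\<in>#M. monom 1 1 - [:c:])"
    using x_pow_mult_minus_one_factors[OF M, of 1] by simp
  finally have "size M = r"
    by (simp add: degree_prod_mset_monom_minus_const)
  have "(\<Prod>c\<in>#M. 1 - c) = 0"
    using arg_cong[OF M, of "\<lambda>P. poly P 1"] by (simp add: poly_prod_mset poly_monom)
  then have "1 \<in># M"
    by (simp add: image_iff)
  then obtain M' where "M = add_mset 1 M'"
    by (metis multi_member_split)
  with M \<open>size M = r\<close> show ?thesis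
    using that by simp
qed

lemma Fq_practical_mult:
  assumes split: "splits_linear (monom 1 r - 1 :: 'a::{field,finite} poly)"
    and r: "r \<ge> 1" and practical: "Fq_practical TYPE('a) n"
  shows "Fq_practical TYPE('a) (r * n)"
  unfolding Fq_practical_def
proof (intro conjI allI impI)
  obtain M :: "'a multiset"
    where M: "monom 1 r - 1 = (\<Prod>c\<in>#add_mset 1 M. [:- c, 1:])" "size M = r - 1"
    using splits_x_pow_minus_one_elim[OF split r] by blast
  have n: "n \<ge> 1"
    using practical by (simp add: Fq_practical_def)
  show "r * n > 0"
    using r n by simp
  define Y :: "'a poly" where "Y = monom 1 n"
  fix k
  assume k: "1 \<le> k \<and> k \<le> r * n - 1"
  have "1 \<le> r * n"
    using r n by simp
  with k have "k < r * n"
    by linarith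
  then have "k div n \<le> size M"
    using M(2) less_mult_imp_div_less by fastforce
  then obtain N where N: "N \<subseteq># M" "size N = k div n"
    using exists_submset_of_size by blast
  have "k mod n < n"
    using n by simp
  then obtain g where g: "degree g = k mod n" "g dvd Y - 1"
    unfolding Y_def by (rule Fq_practical_dvd_of_degree_less[OF practical])
  have "g \<noteq> 0"
    using g(2) monom_minus_const_nonzero[OF n, of 1] by (auto simp: Y_def one_pCons)
  moreover have "(\<Prod>c\<in>#N. Y - [:c:]) \<noteq> 0"
    unfolding Y_def by (rule prod_mset_monom_minus_const_nonzero[OF n])
  ultimately have "degree ((\<Prod>c\<in>#N. Y - [:c:]) * g) = n * (k div n) + k mod n"
    using g(1) N(2) by (simp add: degree_mult_eq Y_def degree_prod_mset_monom_minus_const[OF n])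
  also have "\<dots> = k"
    by simp
  finally have degree_k: "degree ((\<Prod>c\<in>#N. Y - [:c:]) * g) = k" .
  have "(\<Prod>c\<in>#N. Y - [:c:]) * g dvd (\<Prod>c\<in>#M. Y - [:c:]) * (Y - 1)"
    using N(1) g(2) by (intro mult_dvd_mono prod_mset_subset_imp_dvd image_mset_subseteq_mono)
  also have "(\<Prod>c\<in>#M. Y - [:c:]) * (Y - 1) = monom 1 (r * n) - 1"
    using x_pow_mult_minus_one_factors[OF M(1), of n] by (simp add: Y_def one_pCons mult.commute)
  finally show "\<exists>f :: 'a poly. degree f = k \<and> f dvd monom 1 (r * n) - 1"
    using degree_k by blast
qed

lemma Fq_practical_if_prime_divisors_split:
  fixes n :: nat
  assumes "n \<ge> 1"
    and "\<And>r. prime r \<Longrightarrow> r dvd n \<Longrightarrow> splits_linear (monom 1 r - 1 :: 'a::{field,finite} poly)"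
  shows "Fq_practical TYPE('a) n"
  using assms
proof (induction n rule: prime_divisors_induct)
  case (factor r n)
  have "n \<ge> 1"
    using factor.prems(1) by (cases n) auto
  then have "Fq_practical TYPE('a) n"
    using factor.prems(2) by (intro factor.IH) auto
  moreover have "splits_linear (monom 1 r - 1 :: 'a poly)"
    using factor.hyps factor.prems(2) by simp
  ultimately show ?case
    using factor.hyps prime_ge_1_nat by (intro Fq_practical_mult) auto
qed (auto simp: Fq_practical_def)

theorem theorem5p5:
  fixes p q m n :: nat
  assumes "card (UNIV :: 'a set) = q"
    and "prime p" and "q = p ^ m"
    and "n \<ge> 2"
    and "\<forall>r. prime r \<and> r dvd n \<longrightarrow> r dvd p * (q - 1)"
  shows "Fq_practical TYPE('a::{field,finite}) n"
proof -
  have char_prime: "prime CHAR('a)"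
    by (intro prime_CHAR_semidom finite_imp_CHAR_pos) simp
  moreover have "CHAR('a) dvd p ^ m"
    using CHAR_dvd_CARD[where ?'a = 'a] assms(1,3) by simp
  ultimately have char: "CHAR('a) = p"
    using assms(2) by (metis prime_dvd_power primes_dvd_imp_eq)
  have "splits_linear (monom 1 r - 1 :: 'a poly)" if r: "prime r" "r dvd n" for r
  proof -
    have "r dvd p \<or> r dvd q - 1"
      using assms(5) r by (simp add: prime_dvd_mult_iff)
    then show ?thesis
    proof
      assume "r dvd p"
      then have "r = CHAR('a)"
        using r(1) assms(2) char by (simp add: primes_dvd_imp_eq)
      with char_prime show ?thesis
        by (simp only: splits_x_pow_char_minus_one)
    next
      assume "r dvd q - 1"
      then show ?thesis
        using assms(1) by (intro splits_x_pow_minus_one_if_dvd_card) simp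
    qed
  qed
  with assms(4) show ?thesis
    by (intro Fq_practical_if_prime_divisors_split) auto
qed

end
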